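(* Let $K\subset\mathbb{R}^n$ be a closed convex set with diameter $d$ and $\sigma>0$. Then $\varepsilon^*\gtrsim\sigma\wedge d$.
   Context: $M(\eta,T)$ is the maximal cardinality of a subset of $T$ with pairwise Euclidean distances $>\eta$; the local entropy is $\log M^{\mathrm{loc}}(\varepsilon)$ with $M^{\mathrm{loc}}(\varepsilon)=\sup_{\theta\in K}M(\varepsilon/c^*,B(\theta,\varepsilon)\cap K)$, where $B$ is the closed Euclidean ball and $c^*$ is a sufficiently large absolute constant. $\varepsilon^*=\sup\{\varepsilon:\varepsilon^2/\sigma^2\le\log M^{\mathrm{loc}}(\varepsilon)\}$ (its square is up to constants the minimax risk for estimating $\mu\in K$ from $Y=\mu+\xi$, $\xi\sim N(0,\sigma^2\mathbb{I}_n)$). $\gtrsim$ hides an absolute constant. *)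

theory Defs
  imports "HOL-Analysis.Analysis"
begin

text \<open>Points of R^n are represented as functions nat => real vanishing outside {..<n},
  so that the dimension n can be quantified inside the statement (the constant in the
  theorem must be independent of n).\<close>

definition Rn :: "nat \<Rightarrow> (nat \<Rightarrow> real) set" where
  "Rn n = {x. \<forall>i\<ge>n. x i = 0}"

definition edist :: "nat \<Rightarrow> (nat \<Rightarrow> real) \<Rightarrow> (nat \<Rightarrow> real) \<Rightarrow> real" where
  "edist n x y = sqrt (\<Sum>i<n. (x i - y i)^2)"

definition ecball :: "nat \<Rightarrow> (nat \<Rightarrow> real) \<Rightarrow> real \<Rightarrow> (nat \<Rightarrow> real) set" where
  "ecball n \<theta> r = {x \<in> Rn n. edist n \<theta> x \<le> r}"

definition convex_Rn :: "(nat \<Rightarrow> real) set \<Rightarrow> bool" where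
  "convex_Rn K \<longleftrightarrow> (\<forall>x\<in>K. \<forall>y\<in>K. \<forall>u::real. 0 \<le> u \<and> u \<le> 1 \<longrightarrow> (\<lambda>i. u * x i + (1 - u) * y i) \<in> K)"

definition closed_Rn :: "nat \<Rightarrow> (nat \<Rightarrow> real) set \<Rightarrow> bool" where
  "closed_Rn n K \<longleftrightarrow> (\<forall>X x. (\<forall>k. X k \<in> K) \<and> x \<in> Rn n \<and> (\<lambda>k. edist n (X k) x) \<longlonglongrightarrow> 0 \<longrightarrow> x \<in> K)"

definition bounded_Rn :: "nat \<Rightarrow> (nat \<Rightarrow> real) set \<Rightarrow> bool" where
  "bounded_Rn n K \<longleftrightarrow> (\<exists>B. \<forall>x\<in>K. \<forall>y\<in>K. edist n x y \<le> B)"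

definition diam_Rn :: "nat \<Rightarrow> (nat \<Rightarrow> real) set \<Rightarrow> real" where
  "diam_Rn n K = Sup {edist n x y | x y. x \<in> K \<and> y \<in> K}"

definition packing_number :: "nat \<Rightarrow> real \<Rightarrow> (nat \<Rightarrow> real) set \<Rightarrow> nat" where
  "packing_number n \<eta> T = Sup {card S | S. S \<subseteq> T \<and> finite S \<and>
      (\<forall>x\<in>S. \<forall>y\<in>S. x \<noteq> y \<longrightarrow> edist n x y > \<eta>)}"

definition Mloc :: "nat \<Rightarrow> real \<Rightarrow> (nat \<Rightarrow> real) set \<Rightarrow> real \<Rightarrow> real" where
  "Mloc n cstar K \<epsilon> = (SUP \<theta>\<in>K. real (packing_number n (\<epsilon> / cstar) (ecball n \<theta> \<epsilon> \<inter> K)))"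

definition eps_star :: "nat \<Rightarrow> real \<Rightarrow> real \<Rightarrow> (nat \<Rightarrow> real) set \<Rightarrow> real" where
  "eps_star n cstar \<sigma> K = Sup {\<epsilon>. 0 \<le> \<epsilon> \<and> \<epsilon>^2 / \<sigma>^2 \<le> ln (Mloc n cstar K \<epsilon>)}"

end

theory Submission
  imports Defs
begin

text \<open>If the diameter d of K is positive, convexity gives two points x, z of K at distance
  \<epsilon> = min \<sigma> d / 2. For c* > 1 they are (\<epsilon>/c*)-separated in B(x, \<epsilon>) \<inter> K, so
  M^loc(\<epsilon>) \<ge> 2 and \<epsilon>^2/\<sigma>^2 \<le> 1/4 < ln 2, whence \<epsilon>^* \<ge> \<epsilon>. The suprema involved are
  finite: in a bounded set, separated subsets are uniformly finite by counting grid cells, and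
  for \<epsilon> > c* d every local packing number is 1.\<close>

lemma edist_eq_L2_set: "edist n x y = L2_set (\<lambda>i. x i - y i) {..<n}"
  unfolding edist_def L2_set_def by simp

lemma edist_self [simp]: "edist n x x = 0"
  by (simp add: edist_def)

lemma edist_commute: "edist n x y = edist n y x"
  unfolding edist_def by (simp add: power2_commute)

lemma edist_triangle: "edist n x y \<le> edist n x z + edist n z y"
  using L2_set_triangle_ineq[of "\<lambda>i. x i - z i" "\<lambda>i. z i - y i" "{..<n}"]
  by (simp add: edist_eq_L2_set)

lemma abs_diff_le_edist: "i < n \<Longrightarrow> \<bar>x i - y i\<bar> \<le> edist n x y"
  using member_le_L2_set[of "{..<n}" i "\<lambda>i. \<bar>x i - y i\<bar>"]
  by (simp add: edist_eq_L2_set L2_set_def)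

lemma edist_le_sqrt_mult:
  assumes "\<And>i. i < n \<Longrightarrow> \<bar>x i - y i\<bar> \<le> s"
  shows "edist n x y \<le> sqrt (real n) * s"
proof (cases "n = 0")
  case True
  then show ?thesis by (simp add: edist_def)
next
  case False
  then have "0 \<le> s" using assms[of 0] by linarith
  have "edist n x y = L2_set (\<lambda>i. \<bar>x i - y i\<bar>) {..<n}"
    by (simp add: edist_eq_L2_set L2_set_def)
  also have "\<dots> \<le> L2_set (\<lambda>i. s) {..<n}"
    by (rule L2_set_mono) (use assms in auto)
  also have "\<dots> = sqrt (real n) * s"
    using \<open>0 \<le> s\<close> by (simp add: L2_set_constant)
  finally show ?thesis .
qed

lemma edist_convex_comb: "edist n x (\<lambda>i. u * y i + (1 - u) * x i) = \<bar>u\<bar> * edist n x y"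
proof -
  have "(\<Sum>i<n. (x i - (u * y i + (1 - u) * x i))\<^sup>2) = u\<^sup>2 * (\<Sum>i<n. (x i - y i)\<^sup>2)"
    by (simp add: sum_distrib_left power2_eq_square algebra_simps)
  then show ?thesis
    unfolding edist_def by (simp add: real_sqrt_mult)
qed

lemma edist_le_if_same_grid_cell:
  assumes "0 < s" and "\<And>i. i < n \<Longrightarrow> \<lfloor>(x i - a i) / s\<rfloor> = \<lfloor>(y i - a i) / s\<rfloor>"
  shows "edist n x y \<le> sqrt (real n) * s"
proof (rule edist_le_sqrt_mult)
  fix i assume "i < n"
  then have "\<lfloor>(x i - a i) / s\<rfloor> = \<lfloor>(y i - a i) / s\<rfloor>" by (rule assms(2))
  then have "\<bar>(x i - a i) / s - (y i - a i) / s\<bar> < 1"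
    by linarith
  also have "(x i - a i) / s - (y i - a i) / s = (x i - y i) / s"
    by (simp add: diff_divide_distrib)
  finally show "\<bar>x i - y i\<bar> \<le> s"
    using \<open>0 < s\<close> by (simp add: abs_divide)
qed

lemma convex_Rn_obtain_edist_eq:
  assumes "convex_Rn K" "x \<in> K" "y \<in> K" "0 \<le> \<epsilon>" "\<epsilon> \<le> edist n x y"
  obtains z where "z \<in> K" "edist n x z = \<epsilon>"
proof (cases "edist n x y = 0")
  case True
  then show ?thesis using that[of x] assms by simp
next
  case False
  define u where "u = \<epsilon> / edist n x y"
  have "0 \<le> u" "u \<le> 1"
    using assms(4,5) False unfolding u_def by auto
  then have "(\<lambda>i. u * y i + (1 - u) * x i) \<in> K"
    using assms(1-3) unfolding convex_Rn_def by blast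
  moreover have "edist n x (\<lambda>i. u * y i + (1 - u) * x i) = \<epsilon>"
    using \<open>0 \<le> u\<close> False by (simp add: edist_convex_comb) (simp add: u_def)
  ultimately show ?thesis by (rule that)
qed

lemma less_diam_Rn_obtain:
  assumes "K \<noteq> {}" "bounded_Rn n K" "r < diam_Rn n K"
  obtains x y where "x \<in> K" "y \<in> K" "r < edist n x y"
proof -
  define D where "D = {edist n x y | x y. x \<in> K \<and> y \<in> K}"
  have "D \<noteq> {}" "bdd_above D"
    using assms(1,2) unfolding D_def bounded_Rn_def bdd_above_def by blast+
  moreover have "r < Sup D"
    using assms(3) unfolding D_def diam_Rn_def .
  ultimately show ?thesis
    using that unfolding D_def by (auto simp: less_cSup_iff)
qed

lemma floor_divide_in_ceiling_range:
  fixes t B s :: real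
  assumes "\<bar>t\<bar> \<le> B" "0 < s"
  shows "\<lfloor>t / s\<rfloor> \<in> {-\<lceil>B / s\<rceil>..\<lceil>B / s\<rceil>}"
proof -
  have "\<bar>t / s\<bar> \<le> of_int \<lceil>B / s\<rceil>"
    using assms by (simp add: abs_divide divide_right_mono order_trans[OF _ le_of_int_ceiling])
  then have "- of_int \<lceil>B / s\<rceil> \<le> t / s" "t / s \<le> of_int \<lceil>B / s\<rceil>"
    by linarith+
  then show ?thesis
    by (simp add: floor_le_iff le_floor_iff)
qed

definition separated :: "nat \<Rightarrow> real \<Rightarrow> (nat \<Rightarrow> real) set \<Rightarrow> bool" where
  "separated n \<eta> S \<longleftrightarrow> (\<forall>x\<in>S. \<forall>y\<in>S. x \<noteq> y \<longrightarrow> \<eta> < edist n x y)"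

lemma packing_number_eq_Sup_separated:
  "packing_number n \<eta> T = Sup {card S | S. S \<subseteq> T \<and> finite S \<and> separated n \<eta> S}"
  unfolding packing_number_def separated_def ..

lemma separated_card_bounded:
  assumes "bounded_Rn n K" and "0 < \<eta>"
  obtains P where "\<And>S. S \<subseteq> K \<Longrightarrow> finite S \<Longrightarrow> separated n \<eta> S \<Longrightarrow> card S \<le> P"
proof (cases "K = {}")
  case True
  then show ?thesis using that[of 0] by simp
next
  case False
  then obtain a where a: "a \<in> K" by auto
  obtain B where B: "\<forall>x\<in>K. \<forall>y\<in>K. edist n x y \<le> B"
    using assms(1) unfolding bounded_Rn_def by auto
  define s where "s = \<eta> / (sqrt (real n) + 1)"
  have "0 < sqrt (real n) + 1" by (simp add: add_nonneg_pos)
  then have "0 < s" "(sqrt (real n) + 1) * s = \<eta>"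
    using assms(2) unfolding s_def by simp_all
  then have s_small: "sqrt (real n) * s < \<eta>"
    by (simp add: algebra_simps)
  define cell where "cell x = map (\<lambda>i. \<lfloor>(x i - a i) / s\<rfloor>) [0..<n]" for x :: "nat \<Rightarrow> real"
  have "\<lfloor>(x i - a i) / s\<rfloor> \<in> {-\<lceil>B / s\<rceil>..\<lceil>B / s\<rceil>}" if "x \<in> K" "i < n" for x i
  proof (rule floor_divide_in_ceiling_range[OF _ \<open>0 < s\<close>])
    show "\<bar>x i - a i\<bar> \<le> B"
      using abs_diff_le_edist[of i n x a] B a that by force
  qed
  then have "cell ` K \<subseteq> {xs. set xs \<subseteq> {-\<lceil>B / s\<rceil>..\<lceil>B / s\<rceil>} \<and> length xs = n}"
    unfolding cell_def by auto
  then have finite_cells: "finite (cell ` K)"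
    by (rule finite_subset) (simp add: finite_lists_length_eq)
  show ?thesis
  proof (rule that)
    fix S assume S: "S \<subseteq> K" "finite S" "separated n \<eta> S"
    have "inj_on cell S"
    proof (rule inj_onI, rule ccontr)
      fix x y assume "x \<in> S" "y \<in> S" "cell x = cell y" "x \<noteq> y"
      then have "\<eta> < edist n x y"
        using S(3) unfolding separated_def by blast
      moreover have "edist n x y \<le> sqrt (real n) * s"
        using \<open>0 < s\<close> \<open>cell x = cell y\<close>
        by (intro edist_le_if_same_grid_cell) (auto simp: cell_def map_eq_conv)
      ultimately show False using s_small by linarith
    qed
    then have "card S = card (cell ` S)" by (simp add: card_image)
    also have "\<dots> \<le> card (cell ` K)"
      using S(1) finite_cells by (intro card_mono image_mono)
    finally show "card S \<le> card (cell ` K)" .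
  qed
qed

lemma packing_number_le:
  assumes "\<And>S. S \<subseteq> T \<Longrightarrow> finite S \<Longrightarrow> separated n \<eta> S \<Longrightarrow> card S \<le> P"
  shows "packing_number n \<eta> T \<le> P"
  unfolding packing_number_eq_Sup_separated
  by (rule cSup_least) (use assms in \<open>auto intro: exI[of _ "{}"] simp: separated_def\<close>)

lemma card_le_packing_number:
  assumes "\<And>S. S \<subseteq> T \<Longrightarrow> finite S \<Longrightarrow> separated n \<eta> S \<Longrightarrow> card S \<le> P"
    and "S \<subseteq> T" "finite S" "separated n \<eta> S"
  shows "card S \<le> packing_number n \<eta> T"
  unfolding packing_number_eq_Sup_separated
  by (rule cSup_upper) (use assms in \<open>auto simp: bdd_above_def\<close>)

lemma packing_number_eq_1:
  assumes "\<theta> \<in> T" and "\<forall>x\<in>T. \<forall>y\<in>T. edist n x y \<le> \<eta>"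
  shows "packing_number n \<eta> T = 1"
proof -
  have le1: "card S \<le> 1" if "S \<subseteq> T" "finite S" "separated n \<eta> S" for S
  proof -
    have "x = y" if "x \<in> S" "y \<in> S" for x y
      using that \<open>S \<subseteq> T\<close> \<open>separated n \<eta> S\<close> assms(2) unfolding separated_def
      by (meson not_le subsetD)
    then show ?thesis
      using \<open>finite S\<close> by (simp add: card_le_Suc0_iff_eq)
  qed
  have "card {\<theta>} \<le> packing_number n \<eta> T"
    using assms(1) by (intro card_le_packing_number[OF le1]) (auto simp: separated_def)
  moreover have "packing_number n \<eta> T \<le> 1"
    by (rule packing_number_le) (rule le1)
  ultimately show ?thesis by simp
qed

lemma centre_in_ecball: "\<theta> \<in> Rn n \<Longrightarrow> 0 \<le> r \<Longrightarrow> \<theta> \<in> ecball n \<theta> r"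
  unfolding ecball_def by simp

lemma Mloc_eq_1:
  assumes "K \<subseteq> Rn n" "K \<noteq> {}" "0 \<le> \<epsilon>"
    and "\<And>\<theta> x y. \<theta> \<in> K \<Longrightarrow> x \<in> ecball n \<theta> \<epsilon> \<inter> K \<Longrightarrow> y \<in> ecball n \<theta> \<epsilon> \<inter> K \<Longrightarrow>
           edist n x y \<le> \<epsilon> / cstar"
  shows "Mloc n cstar K \<epsilon> = 1"
proof -
  have "packing_number n (\<epsilon> / cstar) (ecball n \<theta> \<epsilon> \<inter> K) = 1" if "\<theta> \<in> K" for \<theta>
    using that assms centre_in_ecball by (intro packing_number_eq_1[of \<theta>]) auto
  then show ?thesis
    unfolding Mloc_def using assms(2) by simp
qed

lemma Mloc_0: "K \<subseteq> Rn n \<Longrightarrow> K \<noteq> {} \<Longrightarrow> Mloc n cstar K 0 = 1"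
proof (rule Mloc_eq_1)
  fix \<theta> x y assume "x \<in> ecball n \<theta> 0 \<inter> K" "y \<in> ecball n \<theta> 0 \<inter> K"
  then have "edist n x \<theta> \<le> 0" "edist n \<theta> y \<le> 0"
    unfolding ecball_def by (auto simp: edist_commute)
  then show "edist n x y \<le> 0 / cstar"
    using edist_triangle[of n x y \<theta>] by simp
qed auto

lemma Mloc_eq_1_beyond_diameter:
  assumes "K \<subseteq> Rn n" "K \<noteq> {}" "\<forall>x\<in>K. \<forall>y\<in>K. edist n x y \<le> B" "0 < cstar" "cstar * B \<le> \<epsilon>"
  shows "Mloc n cstar K \<epsilon> = 1"
proof (rule Mloc_eq_1)
  have "0 \<le> B" using assms(2,3) edist_self by force
  then show "0 \<le> \<epsilon>" using assms(4,5) by (meson mult_nonneg_nonneg less_imp_le order_trans)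
  have "B \<le> \<epsilon> / cstar" using assms(4,5) by (simp add: field_simps)
  then show "edist n x y \<le> \<epsilon> / cstar" if "x \<in> ecball n \<theta> \<epsilon> \<inter> K" "y \<in> ecball n \<theta> \<epsilon> \<inter> K" for \<theta> x y
    using that assms(3) by force
qed (use assms in auto)

lemma two_le_Mloc:
  assumes "K \<subseteq> Rn n" "bounded_Rn n K" "1 < cstar"
    and "x \<in> K" "z \<in> K" "edist n x z = \<epsilon>" "0 < \<epsilon>"
  shows "2 \<le> Mloc n cstar K \<epsilon>"
proof -
  have "0 < \<epsilon> / cstar" "\<epsilon> / cstar < \<epsilon>"
    using assms(3,7) by (simp_all add: field_simps)
  obtain P where P: "\<And>S. S \<subseteq> K \<Longrightarrow> finite S \<Longrightarrow> separated n (\<epsilon> / cstar) S \<Longrightarrow> card S \<le> P"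
    using separated_card_bounded[OF assms(2) \<open>0 < \<epsilon> / cstar\<close>] by blast
  then have P_ball: "card S \<le> P"
    if "S \<subseteq> ecball n \<theta> \<epsilon> \<inter> K" "finite S" "separated n (\<epsilon> / cstar) S" for S \<theta>
    using that by blast
  have "separated n (\<epsilon> / cstar) {x, z}"
    using assms(6) \<open>\<epsilon> / cstar < \<epsilon>\<close> unfolding separated_def by (auto simp: edist_commute)
  moreover have "{x, z} \<subseteq> ecball n x \<epsilon> \<inter> K"
    using assms(1,4-7) centre_in_ecball[of x n \<epsilon>] unfolding ecball_def by auto
  moreover have "x \<noteq> z" using assms(6,7) by auto
  ultimately have "card {x, z} \<le> packing_number n (\<epsilon> / cstar) (ecball n x \<epsilon> \<inter> K)"
    by (intro card_le_packing_number) (rule P_ball[of _ x], simp_all)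
  then have "2 \<le> packing_number n (\<epsilon> / cstar) (ecball n x \<epsilon> \<inter> K)"
    using \<open>x \<noteq> z\<close> by simp
  also have "real \<dots> \<le> Mloc n cstar K \<epsilon>"
  proof -
    have "packing_number n (\<epsilon> / cstar) (ecball n \<theta> \<epsilon> \<inter> K) \<le> P" for \<theta>
      by (rule packing_number_le) (rule P_ball)
    then show ?thesis
      unfolding Mloc_def using assms(4) by (intro cSUP_upper bdd_aboveI2[where M = "real P"]) auto
  qed
  finally show ?thesis by simp
qed

lemma le_eps_star:
  assumes "K \<subseteq> Rn n" "K \<noteq> {}" "bounded_Rn n K" "0 < cstar" "\<sigma> \<noteq> 0"
    and "0 \<le> \<epsilon>" "\<epsilon>\<^sup>2 / \<sigma>\<^sup>2 \<le> ln (Mloc n cstar K \<epsilon>)"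
  shows "\<epsilon> \<le> eps_star n cstar \<sigma> K"
proof -
  obtain B where B: "\<forall>x\<in>K. \<forall>y\<in>K. edist n x y \<le> B"
    using assms(3) unfolding bounded_Rn_def by auto
  have "e \<le> cstar * B" if "0 \<le> e" "e\<^sup>2 / \<sigma>\<^sup>2 \<le> ln (Mloc n cstar K e)" for e
  proof (rule ccontr)
    assume "\<not> e \<le> cstar * B"
    moreover have "0 \<le> cstar * B"
      using assms(2,4) B edist_self by fastforce
    ultimately have "0 < e" by linarith
    have "Mloc n cstar K e = 1"
      using assms(1,2,4) B \<open>\<not> e \<le> cstar * B\<close> by (intro Mloc_eq_1_beyond_diameter) auto
    then have "e\<^sup>2 / \<sigma>\<^sup>2 \<le> 0" using that by simp
    moreover have "0 < e\<^sup>2 / \<sigma>\<^sup>2" using \<open>0 < e\<close> assms(5) by simp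
    ultimately show False by linarith
  qed
  then have "bdd_above {e. 0 \<le> e \<and> e\<^sup>2 / \<sigma>\<^sup>2 \<le> ln (Mloc n cstar K e)}"
    by (auto simp: bdd_above_def)
  then show ?thesis
    unfolding eps_star_def by (rule cSup_upper[rotated]) (use assms(6,7) in simp)
qed

lemma eps_star_nonneg:
  assumes "K \<subseteq> Rn n" "K \<noteq> {}" "bounded_Rn n K" "0 < cstar" "\<sigma> \<noteq> 0"
  shows "0 \<le> eps_star n cstar \<sigma> K"
  using le_eps_star[OF assms, of 0] Mloc_0[OF assms(1,2)] by simp

lemma eps_star_ge_half_min:
  assumes "1 < cstar" "K \<subseteq> Rn n" "K \<noteq> {}" "convex_Rn K" "bounded_Rn n K" "0 < \<sigma>"
  shows "min \<sigma> (diam_Rn n K) / 2 \<le> eps_star n cstar \<sigma> K"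
proof (cases "0 < diam_Rn n K")
  case False
  then show ?thesis
    using eps_star_nonneg[of K n cstar \<sigma>] assms by linarith
next
  case True
  define \<epsilon> where "\<epsilon> = min \<sigma> (diam_Rn n K) / 2"
  have "0 < \<epsilon>" "\<epsilon> < diam_Rn n K" "\<epsilon> \<le> \<sigma> / 2"
    using True assms(6) unfolding \<epsilon>_def by auto
  obtain x y where "x \<in> K" "y \<in> K" "\<epsilon> < edist n x y"
    using less_diam_Rn_obtain[OF assms(3,5) \<open>\<epsilon> < diam_Rn n K\<close>] .
  moreover have "0 \<le> \<epsilon>" using \<open>0 < \<epsilon>\<close> by simp
  ultimately obtain z where "z \<in> K" "edist n x z = \<epsilon>"
    using convex_Rn_obtain_edist_eq[OF assms(4)] by (metis less_imp_le)
  have "\<epsilon>\<^sup>2 / \<sigma>\<^sup>2 \<le> (\<sigma> / 2)\<^sup>2 / \<sigma>\<^sup>2"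
    using \<open>0 < \<epsilon>\<close> \<open>\<epsilon> \<le> \<sigma> / 2\<close> by (intro divide_right_mono power_mono) auto
  also have "\<dots> = 1 / 4"
    using assms(6) by (simp add: power_divide)
  also have "\<dots> \<le> ln 2"
    using ln2_ge_two_thirds by linarith
  also have "\<dots> \<le> ln (Mloc n cstar K \<epsilon>)"
    using two_le_Mloc[OF assms(2,5,1) \<open>x \<in> K\<close> \<open>z \<in> K\<close> \<open>edist n x z = \<epsilon>\<close> \<open>0 < \<epsilon>\<close>] by simp
  finally have "\<epsilon> \<le> eps_star n cstar \<sigma> K"
    using assms(1,6) \<open>0 \<le> \<epsilon>\<close> by (intro le_eps_star[OF assms(2,3,5)]) auto
  then show ?thesis
    unfolding \<epsilon>_def .
qed

theorem mainTheorem14: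
  shows "\<exists>C0. \<forall>cstar \<ge> C0. \<exists>c > 0. \<forall>(n::nat) (K::(nat \<Rightarrow> real) set) (\<sigma>::real).
           K \<subseteq> Rn n \<and> K \<noteq> {} \<and> convex_Rn K \<and> closed_Rn n K \<and> bounded_Rn n K \<and> \<sigma> > 0
           \<longrightarrow> eps_star n cstar \<sigma> K \<ge> c * min \<sigma> (diam_Rn n K)"
proof (rule exI[of _ "2 :: real"], intro allI impI,
    rule exI[of _ "1 / 2 :: real"], intro conjI allI impI)
  fix cstar \<sigma> :: real and n K
  assume "2 \<le> cstar"
    and "K \<subseteq> Rn n \<and> K \<noteq> {} \<and> convex_Rn K \<and> closed_Rn n K \<and> bounded_Rn n K \<and> \<sigma> > 0"
  then show "1 / 2 * min \<sigma> (diam_Rn n K) \<le> eps_star n cstar \<sigma> K"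
    using eps_star_ge_half_min[of cstar K n \<sigma>] by simp
qed simp

end
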